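(* Let $\ket{\psi}$ be an $n$-qubit pure state with CP rank $\mathrm{rk}(\ket{\psi})=R$. Then $$\mathcal{C}(\ket{\psi})\le 1-\frac{1}{2^n}\sum_{k=0}^n\binom{n}{k}\max\Big(\frac1R,\;2^{-\min(k,n-k)}\Big).$$
   Context: The CP rank (tensor rank) $\mathrm{rk}(\ket{\psi})$ of an $n$-qubit state is the minimal $r$ such that $\ket{\psi}=\sum_{i=1}^r c_i\bigotimes_{j=1}^n\ket{\phi_i^{(j)}}$ with single-qubit vectors $\ket{\phi_i^{(j)}}$. The concentratable entanglement is $\mathcal{C}(\ket{\psi})=1-\frac{1}{2^{n}}\sum_{\alpha\subseteq [n]}\mathrm{Tr}[\rho_\alpha^2]$, where $\rho_\alpha$ is the reduced density matrix of $\ket{\psi}$ on the qubits in $\alpha$, with $\mathrm{Tr}[\rho_\emptyset^2]=1$. *)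

theory Defs
  imports Complex_Main
begin

text \<open>A basis label is the set S \<subseteq> {..<n} of qubits in state |1>; values outside
  Pow {..<n} are irrelevant. A single-qubit vector is a function bool \<Rightarrow> complex.\<close>

definition is_state :: "nat \<Rightarrow> (nat set \<Rightarrow> complex) \<Rightarrow> bool" where
  "is_state n psi \<longleftrightarrow> (\<Sum>S\<in>Pow {..<n}. (cmod (psi S))\<^sup>2) = 1"

text \<open>Amplitude of the product vector phi 0 \<otimes> ... \<otimes> phi (n-1) at basis label S.\<close>
definition prod_amp :: "nat \<Rightarrow> (nat \<Rightarrow> bool \<Rightarrow> complex) \<Rightarrow> nat set \<Rightarrow> complex" where
  "prod_amp n phi S = (\<Prod>j<n. phi j (j \<in> S))"

definition has_cp_decomp :: "nat \<Rightarrow> (nat set \<Rightarrow> complex) \<Rightarrow> nat \<Rightarrow> bool" where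
  "has_cp_decomp n psi r \<longleftrightarrow>
     (\<exists>(c :: nat \<Rightarrow> complex) (phi :: nat \<Rightarrow> nat \<Rightarrow> bool \<Rightarrow> complex).
        \<forall>S\<in>Pow {..<n}. psi S = (\<Sum>i<r. c i * prod_amp n (phi i) S))"

definition cp_rank :: "nat \<Rightarrow> (nat set \<Rightarrow> complex) \<Rightarrow> nat" where
  "cp_rank n psi = (LEAST r. has_cp_decomp n psi r)"

text \<open>Reduced density matrix on the qubits in alpha (partial trace over the rest):
  rows/columns indexed by subsets x, y of alpha.\<close>
definition reduced_dm :: "nat \<Rightarrow> (nat set \<Rightarrow> complex) \<Rightarrow> nat set \<Rightarrow> nat set \<Rightarrow> nat set \<Rightarrow> complex" where
  "reduced_dm n psi alpha x y =
     (\<Sum>z\<in>Pow ({..<n} - alpha). psi (x \<union> z) * cnj (psi (y \<union> z)))"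

definition purity :: "nat \<Rightarrow> (nat set \<Rightarrow> complex) \<Rightarrow> nat set \<Rightarrow> real" where
  "purity n psi alpha =
     Re (\<Sum>x\<in>Pow alpha. \<Sum>y\<in>Pow alpha. reduced_dm n psi alpha x y * reduced_dm n psi alpha y x)"

definition conc_ent :: "nat \<Rightarrow> (nat set \<Rightarrow> complex) \<Rightarrow> real" where
  "conc_ent n psi = 1 - (1 / 2 ^ n) * (\<Sum>alpha\<in>Pow {..<n}. purity n psi alpha)"

end

theory Submission
  imports Defs "HOL-Analysis.Convex"
begin

(* For a bipartition alpha | complement, the reduced state is rho = M M^* with
   M x z = psi (x \<union> z), so Tr rho = 1 and purity = Tr (rho^2), and both traces depend
   only on the column Gram matrix of M. If M is a sum of r products u_i(x) w_i(z),
   orthogonalising the u_i shows that this Gram matrix is also that of a matrix V with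
   only r rows; for V, Cauchy-Schwarz over the rows gives (Tr rho)^2 <= r Tr (rho^2).
   A CP decomposition of length R yields r = R, and the trivial decompositions along
   either side yield r = 2^|alpha| and r = 2^(n - |alpha|). Summing the resulting
   lower bounds on the purities over alpha, grouped by |alpha|, gives the theorem. *)

definition inner_on :: "'x set \<Rightarrow> ('x \<Rightarrow> complex) \<Rightarrow> ('x \<Rightarrow> complex) \<Rightarrow> complex" where
  "inner_on X u v = (\<Sum>x\<in>X. cnj (u x) * v x)"

lemma inner_on_self: "inner_on X u u = of_real (\<Sum>x\<in>X. (cmod (u x))\<^sup>2)"
  unfolding inner_on_def of_real_sum
  by (intro sum.cong refl) (metis complex_norm_square mult.commute of_real_power)

lemma inner_on_commute: "inner_on X v u = cnj (inner_on X u v)"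
  unfolding inner_on_def by (simp add: mult.commute)

lemma inner_on_self_eq_0D:
  assumes "finite X" "inner_on X u u = 0" "x \<in> X"
  shows "u x = 0"
proof -
  have "(\<Sum>x\<in>X. (cmod (u x))\<^sup>2) = 0"
    using assms(2) by (simp only: inner_on_self of_real_eq_0_iff)
  then show ?thesis
    using assms(1,3) by (simp add: sum_nonneg_eq_0_iff)
qed

lemma inner_on_diff_right: "inner_on X u (\<lambda>x. v x - w x) = inner_on X u v - inner_on X u w"
  unfolding inner_on_def by (simp add: right_diff_distrib sum_subtractf)

lemma inner_on_sum_right:
  "inner_on X u (\<lambda>x. \<Sum>j\<in>J. c j * e j x) = (\<Sum>j\<in>J. c j * inner_on X u (e j))"
  unfolding inner_on_def
  by (simp add: sum_distrib_left sum_distrib_right mult_ac sum.swap[of _ X])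

lemma inner_on_sum_left:
  "inner_on X (\<lambda>x. \<Sum>j\<in>J. c j * e j x) v = (\<Sum>j\<in>J. cnj (c j) * inner_on X (e j) v)"
  unfolding inner_on_def
  by (simp add: sum_distrib_left sum_distrib_right mult_ac sum.swap[of _ X])

lemma sum_inner_on_orthogonal:
  assumes "finite J" "pairwise (\<lambda>i j. inner_on X (e i) (e j) = 0) J" "j \<in> J"
  shows "(\<Sum>l\<in>J. c l * inner_on X (e j) (e l)) = c j * inner_on X (e j) (e j)"
proof -
  have "(\<Sum>l\<in>J - {j}. c l * inner_on X (e j) (e l)) = 0"
    using assms(2,3) by (intro sum.neutral) (auto simp: pairwise_def)
  then show ?thesis
    using assms(1,3) by (simp add: sum.remove[of _ j])
qed

lemma inner_on_orthogonal_expansion: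
  assumes "finite J" "pairwise (\<lambda>i j. inner_on X (e i) (e j) = 0) J"
  shows "inner_on X (\<lambda>x. \<Sum>i\<in>J. c i * e i x) (\<lambda>x. \<Sum>j\<in>J. d j * e j x)
       = (\<Sum>i\<in>J. cnj (c i) * d i * inner_on X (e i) (e i))"
  unfolding inner_on_sum_left inner_on_sum_right
  by (intro sum.cong refl) (simp add: sum_inner_on_orthogonal[OF assms] mult.assoc)

lemma inner_on_residual_orthogonal:
  assumes "finite X" "finite J" "pairwise (\<lambda>i j. inner_on X (e i) (e j) = 0) J" "j \<in> J"
  shows "inner_on X (e j)
           (\<lambda>x. u x - (\<Sum>l\<in>J. inner_on X (e l) u / inner_on X (e l) (e l) * e l x)) = 0"
proof (cases "inner_on X (e j) (e j) = 0")
  case True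
  have "e j x = 0" if "x \<in> X" for x
    using inner_on_self_eq_0D[OF assms(1) True that] .
  then show ?thesis
    by (simp add: inner_on_def)
next
  case False
  let ?c = "\<lambda>l. inner_on X (e l) u / inner_on X (e l) (e l)"
  have "inner_on X (e j) (\<lambda>x. \<Sum>l\<in>J. ?c l * e l x) = ?c j * inner_on X (e j) (e j)"
    unfolding inner_on_sum_right using assms(2-4) by (rule sum_inner_on_orthogonal)
  then show ?thesis
    using False by (simp add: inner_on_diff_right)
qed

lemma gram_schmidt_orthogonal:
  fixes u :: "'i \<Rightarrow> 'x \<Rightarrow> complex"
  assumes "finite I" "finite X"
  shows "\<exists>e a. pairwise (\<lambda>i j. inner_on X (e i) (e j) = 0) I
           \<and> (\<forall>i\<in>I. \<forall>x\<in>X. u i x = (\<Sum>j\<in>I. a i j * e j x))"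
  using assms(1)
proof (induction I rule: finite_induct)
  case empty
  show ?case by simp
next
  case (insert k I)
  then obtain e a where orth: "pairwise (\<lambda>i j. inner_on X (e i) (e j) = 0) I"
    and rep: "\<forall>i\<in>I. \<forall>x\<in>X. u i x = (\<Sum>j\<in>I. a i j * e j x)"
    by blast
  \<comment> \<open>a zero vector \<open>e j\<close> gets coefficient \<open>0 / 0 = 0\<close>\<close>
  define c where "c j = inner_on X (e j) (u k) / inner_on X (e j) (e j)" for j
  define e' where "e' = e(k := (\<lambda>x. u k x - (\<Sum>j\<in>I. c j * e j x)))"
  define a' where "a' i j = (if i = k then (if j = k then 1 else c j)
                             else (if j = k then 0 else a i j))" for i j
  have new_orth: "inner_on X (e j) (e' k) = 0" if "j \<in> I" for j
    using inner_on_residual_orthogonal[OF assms(2) insert(1) orth that, of "u k"]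
    by (simp add: e'_def c_def)
  have "pairwise (\<lambda>i j. inner_on X (e' i) (e' j) = 0) (insert k I)"
    using orth new_orth insert(2) inner_on_commute[of X "e' k"]
    by (auto simp: pairwise_insert e'_def pairwise_def)
  moreover have "u i x = (\<Sum>j\<in>insert k I. a' i j * e' j x)" if "i \<in> insert k I" "x \<in> X" for i x
  proof -
    have "(\<Sum>j\<in>I. a' i j * e' j x) = (\<Sum>j\<in>I. (if i = k then c j else a i j) * e j x)"
      using insert(2) by (intro sum.cong) (auto simp: a'_def e'_def)
    then show ?thesis
      using insert(1,2) that rep by (auto simp: a'_def e'_def)
  qed
  ultimately show ?case by blast
qed

definition frob_sq :: "'x set \<Rightarrow> 'z set \<Rightarrow> ('x \<Rightarrow> 'z \<Rightarrow> complex) \<Rightarrow> real" where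
  "frob_sq X Z M = (\<Sum>x\<in>X. \<Sum>z\<in>Z. (cmod (M x z))\<^sup>2)"

definition mat_purity :: "'x set \<Rightarrow> 'z set \<Rightarrow> ('x \<Rightarrow> 'z \<Rightarrow> complex) \<Rightarrow> real" where
  "mat_purity X Z M = (\<Sum>x\<in>X. \<Sum>y\<in>X. (cmod (\<Sum>z\<in>Z. M x z * cnj (M y z)))\<^sup>2)"

lemma sum_swap_outer_pairs:
  "(\<Sum>x\<in>X. \<Sum>y\<in>Y. \<Sum>z\<in>Z. \<Sum>w\<in>W. f x y z w) = (\<Sum>z\<in>Z. \<Sum>w\<in>W. \<Sum>x\<in>X. \<Sum>y\<in>Y. f x y z w)"
proof -
  have "(\<Sum>y\<in>Y. \<Sum>z\<in>Z. \<Sum>w\<in>W. f x y z w) = (\<Sum>z\<in>Z. \<Sum>w\<in>W. \<Sum>y\<in>Y. f x y z w)" for x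
    by (subst sum.swap) (rule sum.cong[OF refl], rule sum.swap)
  then have "(\<Sum>x\<in>X. \<Sum>y\<in>Y. \<Sum>z\<in>Z. \<Sum>w\<in>W. f x y z w) = (\<Sum>x\<in>X. \<Sum>z\<in>Z. \<Sum>w\<in>W. \<Sum>y\<in>Y. f x y z w)"
    by simp
  also have "\<dots> = (\<Sum>z\<in>Z. \<Sum>w\<in>W. \<Sum>x\<in>X. \<Sum>y\<in>Y. f x y z w)"
    by (subst sum.swap) (rule sum.cong[OF refl], rule sum.swap)
  finally show ?thesis .
qed

lemma frob_sq_col_gram: "frob_sq X Z M = (\<Sum>z\<in>Z. Re (inner_on X (\<lambda>x. M x z) (\<lambda>x. M x z)))"
  unfolding frob_sq_def inner_on_self by (simp add: sum.swap[of _ X])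

lemma mat_purity_col_gram:
  "mat_purity X Z M = (\<Sum>z\<in>Z. \<Sum>z'\<in>Z. (cmod (inner_on X (\<lambda>x. M x z) (\<lambda>x. M x z')))\<^sup>2)"
proof -
  have "complex_of_real (mat_purity X Z M)
      = (\<Sum>x\<in>X. \<Sum>y\<in>X. \<Sum>z\<in>Z. \<Sum>z'\<in>Z. M x z * cnj (M y z) * cnj (M x z' * cnj (M y z')))"
    unfolding mat_purity_def of_real_sum complex_norm_square cnj_sum sum_product ..
  also have "\<dots> = (\<Sum>y\<in>X. \<Sum>x\<in>X. \<Sum>z\<in>Z. \<Sum>z'\<in>Z. M x z * cnj (M y z) * cnj (M x z' * cnj (M y z')))"
    by (rule sum.swap)
  also have "\<dots> = (\<Sum>z\<in>Z. \<Sum>z'\<in>Z. \<Sum>y\<in>X. \<Sum>x\<in>X. cnj (M y z) * M y z' * cnj (cnj (M x z) * M x z'))"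
    by (subst sum_swap_outer_pairs) (intro sum.cong refl, simp add: mult_ac)
  also have "\<dots> = complex_of_real (\<Sum>z\<in>Z. \<Sum>z'\<in>Z. (cmod (inner_on X (\<lambda>x. M x z) (\<lambda>x. M x z')))\<^sup>2)"
    unfolding of_real_sum complex_norm_square inner_on_def cnj_sum sum_product ..
  finally show ?thesis
    by (simp only: of_real_eq_iff)
qed

lemma frob_sq_square_le_card_mat_purity:
  assumes "finite I"
  shows "(frob_sq I Z V)\<^sup>2 \<le> card I * mat_purity I Z V"
proof -
  define b where "b i = (\<Sum>z\<in>Z. (cmod (V i z))\<^sup>2)" for i
  have diagonal: "(b i)\<^sup>2 \<le> (\<Sum>j\<in>I. (cmod (\<Sum>z\<in>Z. V i z * cnj (V j z)))\<^sup>2)" if "i \<in> I" for i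
  proof -
    have "complex_of_real (b i) = (\<Sum>z\<in>Z. V i z * cnj (V i z))"
      unfolding b_def of_real_sum complex_norm_square ..
    then have "(b i)\<^sup>2 = (cmod (\<Sum>z\<in>Z. V i z * cnj (V i z)))\<^sup>2"
      by (metis norm_of_real power2_abs)
    also have "\<dots> \<le> (\<Sum>j\<in>I. (cmod (\<Sum>z\<in>Z. V i z * cnj (V j z)))\<^sup>2)"
      using assms that by (intro member_le_sum) auto
    finally show ?thesis .
  qed
  have "(frob_sq I Z V)\<^sup>2 = (\<Sum>i\<in>I. b i)\<^sup>2"
    unfolding frob_sq_def b_def ..
  also have "\<dots> \<le> (\<Sum>i\<in>I. (b i)\<^sup>2) * card I"
    by (rule sum_squared_le_sum_of_squares)
  also have "\<dots> \<le> mat_purity I Z V * card I"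
    unfolding mat_purity_def using diagonal by (intro mult_right_mono sum_mono) auto
  finally show ?thesis
    by (simp add: mult.commute)
qed

lemma frob_sq_square_le_rank_mat_purity:
  fixes u :: "'i \<Rightarrow> 'x \<Rightarrow> complex" and w :: "'i \<Rightarrow> 'z \<Rightarrow> complex"
  assumes "finite X" "finite I"
    and M: "\<forall>x\<in>X. \<forall>z\<in>Z. M x z = (\<Sum>i\<in>I. u i x * w i z)"
  shows "(frob_sq X Z M)\<^sup>2 \<le> card I * mat_purity X Z M"
proof -
  obtain e a where orth: "pairwise (\<lambda>i j. inner_on X (e i) (e j) = 0) I"
    and rep: "\<forall>i\<in>I. \<forall>x\<in>X. u i x = (\<Sum>j\<in>I. a i j * e j x)"
    using gram_schmidt_orthogonal[OF assms(2,1)] by blast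
  define W where "W j z = (\<Sum>i\<in>I. a i j * w i z)" for j z
  define V where "V j z = of_real (sqrt (\<Sum>x\<in>X. (cmod (e j x))\<^sup>2)) * W j z" for j z
  have M_orth: "M x z = (\<Sum>j\<in>I. W j z * e j x)" if "x \<in> X" "z \<in> Z" for x z
  proof -
    have "M x z = (\<Sum>i\<in>I. \<Sum>j\<in>I. a i j * e j x * w i z)"
      using M rep that by (simp add: sum_distrib_right)
    also have "\<dots> = (\<Sum>j\<in>I. W j z * e j x)"
      unfolding W_def sum_distrib_right by (subst sum.swap) (simp add: mult_ac)
    finally show ?thesis .
  qed
  have gram: "inner_on X (\<lambda>x. M x z) (\<lambda>x. M x z') = inner_on I (\<lambda>j. V j z) (\<lambda>j. V j z')"
    if "z \<in> Z" "z' \<in> Z" for z z'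
  proof -
    have "inner_on X (\<lambda>x. M x z) (\<lambda>x. M x z')
        = inner_on X (\<lambda>x. \<Sum>j\<in>I. W j z * e j x) (\<lambda>x. \<Sum>j\<in>I. W j z' * e j x)"
      using M_orth that by (simp add: inner_on_def)
    also have "\<dots> = (\<Sum>j\<in>I. cnj (W j z) * W j z' * inner_on X (e j) (e j))"
      by (rule inner_on_orthogonal_expansion[OF assms(2) orth])
    also have "\<dots> = inner_on I (\<lambda>j. V j z) (\<lambda>j. V j z')"
      unfolding inner_on_self inner_on_def V_def
      by (intro sum.cong refl) (simp add: sum_nonneg flip: of_real_mult)
    finally show ?thesis .
  qed
  have "frob_sq X Z M = frob_sq I Z V"
    unfolding frob_sq_col_gram using gram by (intro sum.cong refl) simp
  moreover have "mat_purity X Z M = mat_purity I Z V"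
    unfolding mat_purity_col_gram using gram by (intro sum.cong refl) simp
  ultimately show ?thesis
    using frob_sq_square_le_card_mat_purity[OF assms(2)] by simp
qed

lemma cmod_power2_eq_Re: "(cmod a)\<^sup>2 = Re (a * cnj a)"
  by (metis Re_complex_of_real complex_norm_square)

lemma purity_eq_mat_purity:
  "purity n psi alpha = mat_purity (Pow alpha) (Pow ({..<n} - alpha)) (\<lambda>x z. psi (x \<union> z))"
proof -
  have "reduced_dm n psi alpha y x = cnj (reduced_dm n psi alpha x y)" for x y
    unfolding reduced_dm_def by (simp add: mult.commute)
  then show ?thesis
    unfolding purity_def mat_purity_def Re_sum
    by (intro sum.cong refl) (simp add: cmod_power2_eq_Re reduced_dm_def)
qed

lemma frob_sq_bipartition_state:
  assumes "is_state n psi" "alpha \<subseteq> {..<n}"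
  shows "frob_sq (Pow alpha) (Pow ({..<n} - alpha)) (\<lambda>x z. psi (x \<union> z)) = 1"
proof -
  have "frob_sq (Pow alpha) (Pow ({..<n} - alpha)) (\<lambda>x z. psi (x \<union> z))
      = (\<Sum>p\<in>Pow alpha \<times> Pow ({..<n} - alpha). (cmod (psi (fst p \<union> snd p)))\<^sup>2)"
    unfolding frob_sq_def by (subst sum.cartesian_product) (simp add: split_def)
  also have "\<dots> = (\<Sum>S\<in>Pow {..<n}. (cmod (psi S))\<^sup>2)"
    by (rule sum.reindex_bij_witness[where i="\<lambda>S. (S \<inter> alpha, S - alpha)" and j="\<lambda>p. fst p \<union> snd p"])
      (use assms(2) in auto)
  also have "\<dots> = 1"
    using assms(1) unfolding is_state_def .
  finally show ?thesis .
qed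

lemma one_le_card_mult_purity:
  fixes u :: "'i \<Rightarrow> nat set \<Rightarrow> complex" and w :: "'i \<Rightarrow> nat set \<Rightarrow> complex"
  assumes "is_state n psi" "alpha \<subseteq> {..<n}" "finite I"
    and "\<forall>x\<in>Pow alpha. \<forall>z\<in>Pow ({..<n} - alpha). psi (x \<union> z) = (\<Sum>i\<in>I. u i x * w i z)"
  shows "1 \<le> card I * purity n psi alpha"
proof -
  have "finite (Pow alpha)"
    using assms(2) finite_subset by blast
  then have "(frob_sq (Pow alpha) (Pow ({..<n} - alpha)) (\<lambda>x z. psi (x \<union> z)))\<^sup>2
      \<le> card I * purity n psi alpha"
    unfolding purity_eq_mat_purity using assms(3,4) by (rule frob_sq_square_le_rank_mat_purity)
  then show ?thesis
    using frob_sq_bipartition_state[OF assms(1,2)] by simp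
qed

lemma prod_amp_union:
  assumes "alpha \<subseteq> {..<n}" "x \<subseteq> alpha" "z \<subseteq> {..<n} - alpha"
  shows "prod_amp n phi (x \<union> z) = (\<Prod>j\<in>alpha. phi j (j \<in> x)) * (\<Prod>j\<in>{..<n} - alpha. phi j (j \<in> z))"
proof -
  have "finite alpha"
    using assms(1) finite_subset by blast
  then have "prod_amp n phi (x \<union> z)
      = (\<Prod>j\<in>alpha. phi j (j \<in> x \<union> z)) * (\<Prod>j\<in>{..<n} - alpha. phi j (j \<in> x \<union> z))"
    unfolding prod_amp_def using assms(1) by (subst prod.union_disjoint[symmetric]) (auto intro: prod.cong)
  also have "\<dots> = (\<Prod>j\<in>alpha. phi j (j \<in> x)) * (\<Prod>j\<in>{..<n} - alpha. phi j (j \<in> z))"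
  proof -
    have "j \<in> x \<union> z \<longleftrightarrow> j \<in> x" if "j \<in> alpha" for j
      using that assms(3) by auto
    moreover have "j \<in> x \<union> z \<longleftrightarrow> j \<in> z" if "j \<in> {..<n} - alpha" for j
      using that assms(2) by auto
    ultimately show ?thesis
      by (intro arg_cong2[where f = "(*)"] prod.cong) auto
  qed
  finally show ?thesis .
qed

lemma one_div_le_of_one_le_mult:
  fixes a b :: real
  assumes "0 \<le> a" "1 \<le> a * b"
  shows "1 / a \<le> b"
  using assms by (cases "a = 0") (auto simp: divide_le_eq mult.commute)

lemma purity_ge_inverse_cp_length:
  assumes "is_state n psi" "alpha \<subseteq> {..<n}" "has_cp_decomp n psi r"
  shows "1 / r \<le> purity n psi alpha"
proof -
  obtain c phi where dec: "\<forall>S\<in>Pow {..<n}. psi S = (\<Sum>i<r. c i * prod_amp n (phi i) S)"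
    using assms(3) unfolding has_cp_decomp_def by blast
  have "psi (x \<union> z) = (\<Sum>i<r. (c i * (\<Prod>j\<in>alpha. phi i j (j \<in> x))) * (\<Prod>j\<in>{..<n} - alpha. phi i j (j \<in> z)))"
    if "x \<in> Pow alpha" "z \<in> Pow ({..<n} - alpha)" for x z
    using that assms(2) dec by (simp add: prod_amp_union mult.assoc subset_iff)
  then have "1 \<le> card {..<r} * purity n psi alpha"
    using assms(1,2) by (intro one_le_card_mult_purity) auto
  then show ?thesis
    by (intro one_div_le_of_one_le_mult) auto
qed

lemma purity_ge_inverse_subsystem_dim:
  assumes "is_state n psi" "alpha \<subseteq> {..<n}"
  shows "1 / 2 ^ min (card alpha) (n - card alpha) \<le> purity n psi alpha"
proof -
  have "finite alpha"
    using assms(2) finite_subset by blast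
  have "1 \<le> card (Pow alpha) * purity n psi alpha"
    using assms \<open>finite alpha\<close>
    by (intro one_le_card_mult_purity[where u = "\<lambda>y x. if x = y then 1 else 0" and w = "\<lambda>y z. psi (y \<union> z)"])
      (auto simp: if_distrib[where f = "\<lambda>c. c * psi _"] cong: if_cong)
  moreover have "1 \<le> card (Pow ({..<n} - alpha)) * purity n psi alpha"
    using assms
    by (intro one_le_card_mult_purity[where u = "\<lambda>y x. psi (x \<union> y)" and w = "\<lambda>y z. if y = z then 1 else 0"])
      (auto simp: if_distrib[where f = "\<lambda>c. psi _ * c"] cong: if_cong)
  moreover have "card ({..<n} - alpha) = n - card alpha"
    using assms(2) \<open>finite alpha\<close> by (simp add: card_Diff_subset)
  ultimately show ?thesis
    using \<open>finite alpha\<close> by (simp add: card_Pow min_def one_div_le_of_one_le_mult)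
qed

lemma prod_amp_indicator:
  assumes "S \<subseteq> {..<n}" "T \<subseteq> {..<n}"
  shows "prod_amp n (\<lambda>j b. if b = (j \<in> T) then 1 else 0) S = (if S = T then 1 else 0)"
proof (cases "S = T")
  case False
  then obtain j where "j < n" "(j \<in> S) \<noteq> (j \<in> T)"
    using assms unfolding set_eq_iff by blast
  then show ?thesis
    unfolding prod_amp_def by (auto intro: prod_zero)
qed (simp add: prod_amp_def)

lemma has_cp_decomp_card_Pow: "has_cp_decomp n psi (card (Pow {..<n}))"
proof -
  obtain h where h: "bij_betw h {..<card (Pow {..<n})} (Pow {..<n})"
    using ex_bij_betw_nat_finite[of "Pow {..<n}"] by (auto simp: atLeast0LessThan)
  define phi where "phi i j b = (if b = (j \<in> h i) then 1 else 0 :: complex)" for i j b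
  have "psi S = (\<Sum>i<card (Pow {..<n}). psi (h i) * prod_amp n (phi i) S)"
    if S: "S \<in> Pow {..<n}" for S
  proof -
    have "(\<Sum>i<card (Pow {..<n}). psi (h i) * prod_amp n (phi i) S)
        = (\<Sum>i<card (Pow {..<n}). (\<lambda>T. if T = S then psi T else 0) (h i))"
      using S bij_betwE[OF h] unfolding phi_def by (intro sum.cong refl) (auto simp: prod_amp_indicator)
    also have "\<dots> = (\<Sum>T\<in>Pow {..<n}. if T = S then psi T else 0)"
      by (rule sum.reindex_bij_betw[OF h])
    also have "\<dots> = psi S"
      using S by simp
    finally show ?thesis
      by (rule sym)
  qed
  then show ?thesis
    unfolding has_cp_decomp_def by (intro exI[of _ "\<lambda>i. psi (h i)"] exI[of _ phi]) blast
qed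

lemma has_cp_decomp_cp_rank: "has_cp_decomp n psi (cp_rank n psi)"
  unfolding cp_rank_def by (rule LeastI[of "has_cp_decomp n psi", OF has_cp_decomp_card_Pow])

lemma sum_Pow_by_card:
  assumes "finite A"
  shows "(\<Sum>B\<in>Pow A. g (card B)) = (\<Sum>k=0..card A. of_nat (card A choose k) * g k)"
proof -
  have "(\<Sum>B\<in>Pow A. g (card B)) = (\<Sum>k=0..card A. \<Sum>B\<in>{B \<in> Pow A. card B = k}. g (card B))"
    using assms by (intro sum.group[symmetric]) (auto intro: card_mono)
  also have "\<dots> = (\<Sum>k=0..card A. of_nat (card A choose k) * g k)"
  proof (intro sum.cong refl)
    fix k
    have "card {B \<in> Pow A. card B = k} = card A choose k"
      using n_subsets[OF assms, of k] by simp
    then show "(\<Sum>B\<in>{B \<in> Pow A. card B = k}. g (card B)) = of_nat (card A choose k) * g k"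
      by simp
  qed
  finally show ?thesis .
qed

theorem proposition4:
  fixes n :: nat and psi :: "nat set \<Rightarrow> complex" and R :: nat
  assumes "is_state n psi"
    and "cp_rank n psi = R"
  shows "conc_ent n psi \<le>
    1 - (1 / 2 ^ n) * (\<Sum>k = 0..n. real (n choose k) *
          max (1 / real R) (1 / 2 ^ (min k (n - k))))"
proof -
  have cp: "has_cp_decomp n psi R"
    using has_cp_decomp_cp_rank assms(2) by metis
  have "(\<Sum>k = 0..n. real (n choose k) * max (1 / real R) (1 / 2 ^ (min k (n - k))))
      = (\<Sum>alpha\<in>Pow {..<n}. max (1 / real R) (1 / 2 ^ min (card alpha) (n - card alpha)))"
    using sum_Pow_by_card[of "{..<n}" "\<lambda>k. max (1 / real R) (1 / 2 ^ min k (n - k))"] by simp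
  also have "\<dots> \<le> (\<Sum>alpha\<in>Pow {..<n}. purity n psi alpha)"
    using purity_ge_inverse_cp_length[OF assms(1) _ cp] purity_ge_inverse_subsystem_dim[OF assms(1)]
    by (intro sum_mono) auto
  finally show ?thesis
    unfolding conc_ent_def by (intro diff_left_mono mult_left_mono) auto
qed

end
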